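(* Let $m\geq 2$ and $n\geq 2$ be integers, let $G_m$ be a graph of order $m$ and $K_n$ the complete graph of order $n$. Then $$\max\{rvc(G_m),\,n+1\}\leq rvcl(G_m\diamond K_n)\leq m+n+|E(G_m)|-1.$$
   Context: All graphs are finite, simple, connected and undirected; $d$ denotes graph distance. A rainbow vertex $k$-coloring of $G$ is a map $c:V(G)\to\{1,\dots,k\}$ such that every two vertices are joined by a path whose internal vertices all receive distinct colors; $rvc(G)$ is the least $k$ for which $G$ has one. For such $c$ let $R_i=c^{-1}(i)$; the rainbow code of $v$ is $(d(v,R_1),\dots,d(v,R_k))$ with $d(v,R_i)=\min_{x\in R_i}d(v,x)$. A locating rainbow $k$-coloring is a rainbow vertex $k$-coloring in which distinct vertices have distinct rainbow codes; $rvcl(G)$ is the least $k$ for which one exists. For graphs $G_m$ (order $m$) and $H_n$ (order $n$) on disjoint vertex sets, the edge corona $G_m\diamond H_n$ is obtained from one copy of $G_m$ and $|E(G_m)|$ vertex-disjoint copies of $H_n$, one per edge of $G_m$, by joining both end vertices of the $j$-th edge of $G_m$ to every vertex of the $j$-th copy of $H_n$. *)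

theory Defs
  imports Main "HOL-Library.Extended_Nat"
begin

type_synonym 'a graph = "'a set \<times> 'a set set"

definition verts :: "'a graph \<Rightarrow> 'a set" where "verts G = fst G"
definition edges :: "'a graph \<Rightarrow> 'a set set" where "edges G = snd G"

definition simple_graph :: "'a graph \<Rightarrow> bool" where
  "simple_graph G \<longleftrightarrow> finite (verts G) \<and>
     (\<forall>e\<in>edges G. e \<subseteq> verts G \<and> card e = 2)"

definition is_path :: "'a graph \<Rightarrow> 'a list \<Rightarrow> bool" where
  "is_path G p \<longleftrightarrow> p \<noteq> [] \<and> set p \<subseteq> verts G \<and> distinct p \<and>
     (\<forall>i. Suc i < length p \<longrightarrow> {p ! i, p ! Suc i} \<in> edges G)"

definition connected_graph :: "'a graph \<Rightarrow> bool" where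
  "connected_graph G \<longleftrightarrow> (\<forall>u\<in>verts G. \<forall>v\<in>verts G. \<exists>p. is_path G p \<and> hd p = u \<and> last p = v)"

text \<open>Graph distance (infinite if no path exists).\<close>
definition gdist :: "'a graph \<Rightarrow> 'a \<Rightarrow> 'a \<Rightarrow> enat" where
  "gdist G u v = Inf {enat (length p - 1) | p. is_path G p \<and> hd p = u \<and> last p = v}"

text \<open>Distance from a vertex to a set (infinite for the empty set).\<close>
definition gdist_set :: "'a graph \<Rightarrow> 'a \<Rightarrow> 'a set \<Rightarrow> enat" where
  "gdist_set G v R = Inf (gdist G v ` R)"

definition internal :: "'a list \<Rightarrow> 'a list" where
  "internal p = butlast (tl p)"

definition rainbow_vertex_coloring :: "'a graph \<Rightarrow> nat \<Rightarrow> ('a \<Rightarrow> nat) \<Rightarrow> bool" where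
  "rainbow_vertex_coloring G k c \<longleftrightarrow>
     (\<forall>v\<in>verts G. c v \<in> {1..k}) \<and>
     (\<forall>u\<in>verts G. \<forall>v\<in>verts G. \<exists>p. is_path G p \<and> hd p = u \<and> last p = v \<and>
         distinct (map c (internal p)))"

definition rvc :: "'a graph \<Rightarrow> nat" where
  "rvc G = (LEAST k. \<exists>c. rainbow_vertex_coloring G k c)"

definition color_class :: "'a graph \<Rightarrow> ('a \<Rightarrow> nat) \<Rightarrow> nat \<Rightarrow> 'a set" where
  "color_class G c i = {x \<in> verts G. c x = i}"

definition rainbow_code :: "'a graph \<Rightarrow> nat \<Rightarrow> ('a \<Rightarrow> nat) \<Rightarrow> 'a \<Rightarrow> enat list" where
  "rainbow_code G k c v = map (\<lambda>i. gdist_set G v (color_class G c i)) [1..<k+1]"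

definition locating_rainbow_coloring :: "'a graph \<Rightarrow> nat \<Rightarrow> ('a \<Rightarrow> nat) \<Rightarrow> bool" where
  "locating_rainbow_coloring G k c \<longleftrightarrow> rainbow_vertex_coloring G k c \<and>
     inj_on (rainbow_code G k c) (verts G)"

definition rvcl :: "'a graph \<Rightarrow> nat" where
  "rvcl G = (LEAST k. \<exists>c. locating_rainbow_coloring G k c)"

definition complete_graph :: "nat \<Rightarrow> nat graph" where
  "complete_graph n = ({0..<n}, {e. e \<subseteq> {0..<n} \<and> card e = 2})"

text \<open>Edge corona G \<diamond> H: vertices Inl v for v in V(G), and Inr (e, w) for each edge e
 of G (indexing the copy of H) and w in V(H).\<close>
definition edge_corona :: "'a graph \<Rightarrow> 'b graph \<Rightarrow> ('a + ('a set \<times> 'b)) graph" where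
  "edge_corona G H =
    (Inl ` verts G \<union> {Inr (e, w) | e w. e \<in> edges G \<and> w \<in> verts H},
     (\<lambda>e. Inl ` e) ` edges G
     \<union> {{Inr (e, w), Inr (e, w')} | e w w'. e \<in> edges G \<and> {w, w'} \<in> edges H}
     \<union> {{Inl u, Inr (e, w)} | u e w. e \<in> edges G \<and> u \<in> e \<and> w \<in> verts H})"

end

theory Submission
  imports Defs
begin

text \<open>Restricting a rainbow colouring of the edge corona to G gives a rainbow colouring of G:
deleting the copy vertices from a rainbow path between two vertices of G leaves a path of G,
because a detour through the copy of an edge e enters and leaves G at the two ends of e.
The n vertices of one copy of K_n are twins, so a locating colouring needs n colours on them,
and one more, since otherwise an end vertex of the edge would be indistinguishable from the copy
vertex of its own colour. For the upper bound, colour G injectively with 1..m and every copy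
with m+1..m+n, but give vertex 0 in all copies except one a private colour: rainbow paths can be
routed through G, and two copy vertices of equal colour are told apart by their distances to
a private colour.\<close>

lemma is_path_iff_successively:
  "is_path G p \<longleftrightarrow> p \<noteq> [] \<and> set p \<subseteq> verts G \<and> distinct p \<and>
     successively (\<lambda>a b. {a, b} \<in> edges G) p"
  unfolding is_path_def successively_conv_nth by blast

lemma is_path_extend_hd:
  assumes "is_path G p" "x \<in> verts G" "x = hd p \<or> x \<notin> set p \<and> {x, hd p} \<in> edges G"
  obtains q where "is_path G q" "hd q = x" "last q = last p" "set q \<subseteq> insert x (set p)"
proof (cases "x = hd p")
  case False
  with assms have "is_path G (x # p)"
    by (cases p) (auto simp: is_path_iff_successively)
  with assms(1) show ?thesis by (intro that[of "x # p"]) (auto simp: is_path_def)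
qed (use assms(1) that[of p] in auto)

lemma is_path_extend_last:
  assumes "is_path G p" "y \<in> verts G" "y = last p \<or> y \<notin> set p \<and> {last p, y} \<in> edges G"
  obtains q where "is_path G q" "hd q = hd p" "last q = y" "set q \<subseteq> insert y (set p)"
proof (cases "y = last p")
  case False
  with assms have "is_path G (p @ [y])"
    by (auto simp: is_path_iff_successively successively_append_iff)
  with assms(1) show ?thesis by (intro that[of "p @ [y]"]) (auto simp: is_path_def)
qed (use assms(1) that[of p] in auto)

lemma set_internal:
  assumes "distinct p"
  shows "set (internal p) = set p - {hd p, last p}"
proof (cases p)
  case (Cons x q)
  with assms show ?thesis
    by (cases q rule: rev_cases) (auto simp: internal_def)
qed (simp add: internal_def)

lemma internal_map: "internal (map f xs) = map f (internal xs)"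
  by (simp add: internal_def map_butlast map_tl)

lemma internal_filter:
  assumes "xs \<noteq> [] \<Longrightarrow> P (hd xs)" "xs \<noteq> [] \<Longrightarrow> P (last xs)"
  shows "internal (filter P xs) = filter P (internal xs)"
proof (cases xs)
  case (Cons x ys)
  with assms show ?thesis
    by (cases ys rule: rev_cases) (auto simp: internal_def)
qed (simp add: internal_def)

lemma gdist_le_length:
  "is_path G p \<Longrightarrow> hd p = u \<Longrightarrow> last p = v \<Longrightarrow> gdist G u v \<le> enat (length p - 1)"
  unfolding gdist_def by (rule Inf_lower) blast

lemma gdist_greatest:
  "(\<And>p. is_path G p \<Longrightarrow> hd p = u \<Longrightarrow> last p = v \<Longrightarrow> t \<le> enat (length p - 1))
    \<Longrightarrow> t \<le> gdist G u v"
  unfolding gdist_def by (rule Inf_greatest) blast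

lemma gdist_self: "u \<in> verts G \<Longrightarrow> gdist G u u = 0"
  using gdist_le_length[of G "[u]" u u] by (simp add: is_path_def enat_0)

lemma gdist_le_1:
  assumes "{u, v} \<in> edges G" "u \<noteq> v" "u \<in> verts G" "v \<in> verts G"
  shows "gdist G u v \<le> 1"
proof -
  have "is_path G [u, v]" using assms by (simp add: is_path_iff_successively)
  from gdist_le_length[OF this] show ?thesis by (simp add: one_enat_def)
qed

lemma gdist_ge_1: "u \<noteq> v \<Longrightarrow> 1 \<le> gdist G u v"
proof (rule gdist_greatest)
  fix p assume "u \<noteq> v" "is_path G p" "hd p = u" "last p = v"
  then have "2 \<le> length p" by (cases p; cases "tl p") (auto simp: is_path_def)
  then show "1 \<le> enat (length p - 1)" by (simp add: one_enat_def)
qed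

lemma gdist_ge_2: "u \<noteq> v \<Longrightarrow> {u, v} \<notin> edges G \<Longrightarrow> 2 \<le> gdist G u v"
proof (rule gdist_greatest)
  fix p assume "u \<noteq> v" "{u, v} \<notin> edges G" "is_path G p" "hd p = u" "last p = v"
  then have "3 \<le> length p"
    by (cases p; cases "tl p"; cases "tl (tl p)") (auto simp: is_path_def)
  then show "2 \<le> enat (length p - 1)" by (simp add: numeral_eq_enat)
qed

lemma gdist_set_le: "z \<in> R \<Longrightarrow> gdist_set G x R \<le> gdist G x z"
  unfolding gdist_set_def by (rule Inf_lower) simp

lemma gdist_set_greatest: "(\<And>z. z \<in> R \<Longrightarrow> t \<le> gdist G x z) \<Longrightarrow> t \<le> gdist_set G x R"
  unfolding gdist_set_def by (rule Inf_greatest) auto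

lemma gdist_set_eq_0: "x \<in> R \<Longrightarrow> x \<in> verts G \<Longrightarrow> gdist_set G x R = 0"
  using gdist_set_le[of x R G x] gdist_self[of x G] by simp

lemma gdist_set_ge_1: "x \<notin> R \<Longrightarrow> 1 \<le> gdist_set G x R"
  by (rule gdist_set_greatest) (metis gdist_ge_1)

lemma gdist_set_eq_1:
  "x \<notin> R \<Longrightarrow> z \<in> R \<Longrightarrow> {x, z} \<in> edges G \<Longrightarrow> x \<in> verts G \<Longrightarrow> z \<in> verts G
    \<Longrightarrow> gdist_set G x R = 1"
  by (metis antisym gdist_le_1 gdist_set_le gdist_set_ge_1 order_trans)

lemma gdist_set_ge_2:
  "x \<notin> R \<Longrightarrow> (\<And>z. z \<in> R \<Longrightarrow> {x, z} \<notin> edges G) \<Longrightarrow> 2 \<le> gdist_set G x R"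
  by (rule gdist_set_greatest) (metis gdist_ge_2)

lemma gdist_le_if_neighbours_subset:
  assumes "x \<in> verts G" "\<And>z. z \<noteq> x \<Longrightarrow> z \<noteq> y \<Longrightarrow> {y, z} \<in> edges G \<Longrightarrow> {x, z} \<in> edges G"
    and "z \<noteq> x" "z \<noteq> y"
  shows "gdist G x z \<le> gdist G y z"
proof (rule gdist_greatest)
  fix p assume p: "is_path G p" "hd p = y" "last p = z"
  show "gdist G x z \<le> enat (length p - 1)"
  proof (cases "x \<in> set p")
    case True
    then obtain i where i: "i < length p" "p ! i = x" by (metis in_set_conv_nth)
    have "is_path G (drop i p)"
      using p(1) i unfolding is_path_def by (auto dest: in_set_dropD simp: nth_drop)
    moreover have "hd (drop i p) = x" "last (drop i p) = z"
      using i p by (simp_all add: hd_drop_conv_nth)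
    ultimately have "gdist G x z \<le> enat (length (drop i p) - 1)" by (metis gdist_le_length)
    also have "\<dots> \<le> enat (length p - 1)" by simp
    finally show ?thesis .
  next
    case False
    obtain r q where pr: "p = y # r # q"
      using p assms(4) by (cases p; cases "tl p") (auto simp: is_path_def)
    have "{x, r} \<in> edges G"
      using p(1) False assms(2) by (auto simp: pr is_path_iff_successively)
    then have "is_path G (x # r # q)"
      using p(1) pr False assms(1) by (auto simp: is_path_iff_successively)
    from gdist_le_length[OF this] show ?thesis using p(3) by (simp add: pr)
  qed
qed

lemma rainbow_code_eq_iff:
  "rainbow_code G k c x = rainbow_code G k c y \<longleftrightarrow>
   (\<forall>i\<in>{1..k}. gdist_set G x (color_class G c i) = gdist_set G y (color_class G c i))"
  unfolding rainbow_code_def map_eq_conv by auto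

lemma rainbow_code_eq_imp_color_eq:
  assumes "rainbow_code G k c x = rainbow_code G k c y" "c x \<in> {1..k}"
    and "x \<in> verts G" "y \<in> verts G"
  shows "c y = c x"
proof -
  have "gdist_set G x (color_class G c (c x)) = 0"
    using assms by (intro gdist_set_eq_0) (auto simp: color_class_def)
  then have "gdist_set G y (color_class G c (c x)) = 0"
    using assms(1,2) rainbow_code_eq_iff by metis
  then have "y \<in> color_class G c (c x)" using gdist_set_ge_1 by (metis not_one_le_zero)
  then show ?thesis by (simp add: color_class_def)
qed

lemma rainbow_code_eq_if_twins:
  assumes "x \<in> verts G" "y \<in> verts G" "c x = c y"
    and "\<And>z. z \<noteq> x \<Longrightarrow> z \<noteq> y \<Longrightarrow> {x, z} \<in> edges G \<longleftrightarrow> {y, z} \<in> edges G"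
  shows "rainbow_code G k c x = rainbow_code G k c y"
  unfolding rainbow_code_eq_iff
proof
  fix i
  show "gdist_set G x (color_class G c i) = gdist_set G y (color_class G c i)"
  proof (cases "c x = i")
    case True
    then show ?thesis using assms by (simp add: gdist_set_eq_0 color_class_def)
  next
    case False
    have "gdist G x z = gdist G y z" if "z \<in> color_class G c i" for z
    proof -
      have "z \<noteq> x" "z \<noteq> y" using that False assms(3) by (auto simp: color_class_def)
      then show ?thesis
        using gdist_le_if_neighbours_subset[of x G y z] gdist_le_if_neighbours_subset[of y G x z] assms
        by (metis antisym)
    qed
    then show ?thesis unfolding gdist_set_def by (metis image_cong)
  qed
qed

lemma rainbow_code_eq_if_common_neighbours:
  assumes "x \<in> verts G" "y \<in> verts G" "c x = c y"
    and "\<And>i. i \<in> {1..k} \<Longrightarrow> i \<noteq> c x \<Longrightarrow>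
      \<exists>z\<in>verts G. c z = i \<and> {x, z} \<in> edges G \<and> {y, z} \<in> edges G"
  shows "rainbow_code G k c x = rainbow_code G k c y"
  unfolding rainbow_code_eq_iff
proof
  fix i assume i: "i \<in> {1..k}"
  show "gdist_set G x (color_class G c i) = gdist_set G y (color_class G c i)"
  proof (cases "i = c x")
    case True
    then show ?thesis using assms by (simp add: gdist_set_eq_0 color_class_def)
  next
    case False
    then obtain z where z: "z \<in> color_class G c i" "{x, z} \<in> edges G" "{y, z} \<in> edges G"
      using assms(4)[OF i] by (auto simp: color_class_def)
    have "x \<notin> color_class G c i" "y \<notin> color_class G c i"
      using False assms(3) by (auto simp: color_class_def)
    then show ?thesis
      using z assms(1,2) gdist_set_eq_1[of _ "color_class G c i" z G]
      by (simp add: color_class_def)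
  qed
qed

lemma locating_twins_colors_differ:
  assumes "locating_rainbow_coloring G k c" "x \<in> verts G" "y \<in> verts G" "x \<noteq> y"
    and "\<And>z. z \<noteq> x \<Longrightarrow> z \<noteq> y \<Longrightarrow> {x, z} \<in> edges G \<longleftrightarrow> {y, z} \<in> edges G"
  shows "c x \<noteq> c y"
  using assms rainbow_code_eq_if_twins[of x G y c]
  by (auto simp: locating_rainbow_coloring_def dest: inj_onD)

lemma rvc_le: "rainbow_vertex_coloring G k c \<Longrightarrow> rvc G \<le> k"
  unfolding rvc_def by (rule Least_le) blast

lemma rvcl_le: "locating_rainbow_coloring G k c \<Longrightarrow> rvcl G \<le> k"
  unfolding rvcl_def by (rule Least_le) blast

lemma locating_rainbow_coloring_rvcl:
  "locating_rainbow_coloring G k c \<Longrightarrow> \<exists>c. locating_rainbow_coloring G (rvcl G) c"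
  unfolding rvcl_def by (rule LeastI_ex) blast

lemma rainbow_vertex_coloringI:
  assumes "\<And>v. v \<in> verts G \<Longrightarrow> c v \<in> {1..k}" "inj_on c S"
    and "\<And>u v. u \<in> verts G \<Longrightarrow> v \<in> verts G \<Longrightarrow>
      \<exists>p. is_path G p \<and> hd p = u \<and> last p = v \<and> set (internal p) \<subseteq> S"
  shows "rainbow_vertex_coloring G k c"
  unfolding rainbow_vertex_coloring_def
proof (intro conjI ballI)
  fix u v assume "u \<in> verts G" "v \<in> verts G"
  then obtain p where p: "is_path G p" "hd p = u" "last p = v" "set (internal p) \<subseteq> S"
    using assms(3) by blast
  have "distinct (internal p)"
    using p(1) by (simp add: is_path_def internal_def distinct_butlast distinct_tl)
  then have "distinct (map c (internal p))"
    using p(4) inj_on_subset[OF assms(2)] by (simp add: distinct_map)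
  with p(1-3) show "\<exists>p. is_path G p \<and> hd p = u \<and> last p = v \<and> distinct (map c (internal p))"
    by blast
qed (use assms(1) in blast)

lemma verts_pair [simp]: "verts (V, E) = V"
  by (simp add: verts_def)

lemma edges_pair [simp]: "edges (V, E) = E"
  by (simp add: edges_def)

lemma simple_graph_edgeE:
  assumes "simple_graph G" "e \<in> edges G"
  obtains a b where "e = {a, b}" "a \<noteq> b" "a \<in> verts G" "b \<in> verts G"
  using assms by (auto simp: simple_graph_def card_2_iff)

lemma finite_edges: "simple_graph G \<Longrightarrow> finite (edges G)"
  unfolding simple_graph_def by (metis Pow_iff finite_Pow_iff finite_subset subsetI)

lemma connected_graph_edges_nonempty:
  assumes "connected_graph G" "2 \<le> card (verts G)"
  shows "edges G \<noteq> {}"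
proof -
  have "finite (verts G)" using assms(2) card.infinite by fastforce
  with assms(2) obtain u v where "u \<in> verts G" "v \<in> verts G" "u \<noteq> v"
    using card_le_Suc0_iff_eq[of "verts G"] by auto
  moreover obtain p where "is_path G p" "hd p = u" "last p = v"
    using assms(1) calculation by (auto simp: connected_graph_def)
  ultimately have "{p ! 0, p ! 1} \<in> edges G"
    by (cases p; cases "tl p") (auto simp: is_path_def)
  then show ?thesis by blast
qed

lemma verts_complete_graph [simp]: "verts (complete_graph n) = {0..<n}"
  by (simp add: complete_graph_def)

lemma edge_complete_graph_iff [simp]:
  "{w, w'} \<in> edges (complete_graph n) \<longleftrightarrow> w \<noteq> w' \<and> w < n \<and> w' < n"
  by (auto simp: complete_graph_def card_2_iff)

lemma Inl_in_verts_edge_corona [simp]: "Inl a \<in> verts (edge_corona G H) \<longleftrightarrow> a \<in> verts G"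
  by (auto simp: edge_corona_def)

lemma Inr_in_verts_edge_corona [simp]:
  "Inr (e, w) \<in> verts (edge_corona G H) \<longleftrightarrow> e \<in> edges G \<and> w \<in> verts H"
  by (auto simp: edge_corona_def)

lemma edge_corona_vertexE:
  assumes "x \<in> verts (edge_corona G H)"
  obtains (base) a where "x = Inl a" "a \<in> verts G"
    | (copy) e w where "x = Inr (e, w)" "e \<in> edges G" "w \<in> verts H"
  using assms by (cases x) auto

lemma edge_corona_edge_Inl_Inl [simp]:
  "{Inl a, Inl b} \<in> edges (edge_corona G H) \<longleftrightarrow> {a, b} \<in> edges G"
proof -
  have Inl_image: "{Inl a, Inl b} = (Inl ` e :: ('a + 'a set \<times> 'b) set) \<longleftrightarrow> {a, b} = e" for e
    using inj_image_eq_iff[OF inj_Inl, of "{a, b}" e] by simp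
  show ?thesis
    by (simp add: edge_corona_def doubleton_eq_iff image_iff Inl_image)
qed

lemma edge_corona_edge_Inl_Inr [simp]:
  "{Inl a, Inr (e, w)} \<in> edges (edge_corona G H) \<longleftrightarrow> e \<in> edges G \<and> a \<in> e \<and> w \<in> verts H"
  by (auto simp: edge_corona_def doubleton_eq_iff)

lemma edge_corona_edge_Inr_Inl [simp]:
  "{Inr (e, w), Inl a} \<in> edges (edge_corona G H) \<longleftrightarrow> e \<in> edges G \<and> a \<in> e \<and> w \<in> verts H"
  by (simp add: insert_commute)

lemma edge_corona_edge_Inr_Inr [simp]:
  "{Inr (e, w), Inr (e', w')} \<in> edges (edge_corona G H) \<longleftrightarrow>
   e \<in> edges G \<and> e' = e \<and> {w, w'} \<in> edges H"
  unfolding edge_corona_def by (auto simp: doubleton_eq_iff insert_commute) blast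

lemma edge_corona_attachment:
  assumes "simple_graph G" "x \<in> verts (edge_corona G H)"
  obtains a where "a \<in> verts G" "x = Inl a \<or> \<not> isl x \<and> {x, Inl a} \<in> edges (edge_corona G H)"
  using assms(2)
proof (cases rule: edge_corona_vertexE)
  case (copy e w)
  then obtain a b where "e = {a, b}" "a \<in> verts G"
    using assms(1) by (blast elim: simple_graph_edgeE)
  with copy that show ?thesis by auto
qed (use that in auto)

lemma is_path_map_Inl_edge_corona:
  "is_path G p \<Longrightarrow> is_path (edge_corona G H) (map Inl p)"
  by (auto simp: is_path_iff_successively successively_map distinct_map)

lemma edge_corona_path_through_base:
  assumes "simple_graph G" "connected_graph G"
    and x: "x \<in> verts (edge_corona G H)" and y: "y \<in> verts (edge_corona G H)"
  obtains P where "is_path (edge_corona G H) P" "hd P = x" "last P = y"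
    "set (internal P) \<subseteq> Inl ` verts G"
proof (cases "x = y")
  case True
  with x show ?thesis by (intro that[of "[x]"]) (auto simp: is_path_def internal_def)
next
  case False
  let ?H = "edge_corona G H"
  obtain a where a: "a \<in> verts G" "x = Inl a \<or> \<not> isl x \<and> {x, Inl a} \<in> edges ?H"
    using edge_corona_attachment[OF assms(1) x] .
  obtain b where b: "b \<in> verts G" "y = Inl b \<or> \<not> isl y \<and> {y, Inl b} \<in> edges ?H"
    using edge_corona_attachment[OF assms(1) y] .
  obtain p where p: "is_path G p" "hd p = a" "last p = b"
    using assms(2) a(1) b(1) by (auto simp: connected_graph_def)
  define Q where "Q = (map Inl p :: ('a + 'a set \<times> 'b) list)"
  have Q: "is_path ?H Q" "hd Q = Inl a" "last Q = Inl b" "set Q \<subseteq> Inl ` verts G"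
    using p is_path_map_Inl_edge_corona[OF p(1)]
    by (auto simp: Q_def hd_map last_map is_path_def)
  then have "x = hd Q \<or> x \<notin> set Q \<and> {x, hd Q} \<in> edges ?H" using a(2) by auto
  then obtain P1 where P1: "is_path ?H P1" "hd P1 = x" "last P1 = last Q"
      "set P1 \<subseteq> insert x (set Q)"
    by (rule is_path_extend_hd[OF Q(1) x])
  then have "y = last P1 \<or> y \<notin> set P1 \<and> {last P1, y} \<in> edges ?H"
    using Q(3,4) b(2) False by (auto simp: insert_commute)
  then obtain P where P: "is_path ?H P" "hd P = hd P1" "last P = y" "set P \<subseteq> insert y (set P1)"
    by (rule is_path_extend_last[OF P1(1) y])
  moreover have "set (internal P) \<subseteq> Inl ` verts G"
    using P P1(2,4) Q(4) set_internal[of P] by (auto simp: is_path_def)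
  ultimately show ?thesis using that P1(2) by blast
qed

lemma edge_corona_first_base_vertex:
  assumes "successively (\<lambda>x y. {x, y} \<in> edges (edge_corona G H)) P" "P \<noteq> []"
    and "isl (last P)" "hd P = Inr (e, w)"
  shows "projl (hd (filter isl P)) \<in> e"
  using assms
proof (induction P arbitrary: w rule: induct_list012)
  case (3 x y zs)
  show ?case
  proof (cases y)
    case (Inl a)
    then show ?thesis using "3.prems" by simp
  next
    case (Inr ew)
    then obtain e' w' where y: "y = Inr (e', w')" by (cases ew) simp
    then have "e' = e" using "3.prems"(1,4) by simp
    then show ?thesis using "3.IH"(2)[of w'] "3.prems" y by simp
  qed
qed simp_all

lemma edge_corona_projl_successively:
  assumes "simple_graph G"
    and "successively (\<lambda>x y. {x, y} \<in> edges (edge_corona G H)) P" "distinct P" "P \<noteq> []"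
    and "isl (last P)"
  shows "successively (\<lambda>a b. {a, b} \<in> edges G) (map projl (filter isl P))"
  using assms(2-)
proof (induction P rule: induct_list012)
  case (3 x y zs)
  then have IH: "successively (\<lambda>a b. {a, b} \<in> edges G) (map projl (filter isl (y # zs)))"
    by simp
  have xy: "{x, y} \<in> edges (edge_corona G H)" "x \<notin> set (y # zs)"
    using "3.prems"(1,2) by simp_all
  show ?case
  proof (cases x)
    case x: (Inl a)
    show ?thesis
    proof (cases y)
      case (Inl a')
      then show ?thesis using IH xy(1) x by simp
    next
      case (Inr ew)
      then obtain e w where y: "y = Inr (e, w)" by (cases ew) simp
      define b where "b = projl (hd (filter isl (y # zs)))"
      have "filter isl (y # zs) \<noteq> []"
        using "3.prems"(4) by (metis filter_empty_conv last.simps last_in_set list.distinct(1))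
      then have "hd (filter isl (y # zs)) \<in> {z \<in> set (y # zs). isl z}"
        by (metis hd_in_set set_filter)
      then have b: "Inl b = hd (filter isl (y # zs))" "Inl b \<in> set (y # zs)"
        unfolding b_def by (auto simp del: filter.simps)
      have "b \<in> e"
        using edge_corona_first_base_vertex[of G H "y # zs"] "3.prems" y by (simp add: b_def)
      moreover have "a \<in> e" "e \<in> edges G" using xy(1) x y by simp_all
      moreover from this(2) obtain a' b' where "e = {a', b'}"
        using assms(1) by (blast elim: simple_graph_edgeE)
      moreover have "a \<noteq> b" using xy(2) b(2) x by auto
      ultimately have "{a, b} \<in> edges G" by (auto simp: insert_commute)
      then show ?thesis using IH x y b(1)[symmetric] by (cases "filter isl zs") simp_all
    qed
  next
    case (Inr ew)
    then show ?thesis using IH by simp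
  qed
qed simp_all

lemma rainbow_vertex_coloring_edge_corona_base:
  assumes "simple_graph G" and c: "rainbow_vertex_coloring (edge_corona G H) k c"
  shows "rainbow_vertex_coloring G k (c \<circ> Inl)"
  unfolding rainbow_vertex_coloring_def
proof (intro conjI ballI)
  fix u v assume "u \<in> verts G" "v \<in> verts G"
  then have "Inl u \<in> verts (edge_corona G H)" "Inl v \<in> verts (edge_corona G H)" by simp_all
  then obtain P where P: "is_path (edge_corona G H) P" "hd P = Inl u" "last P = Inl v"
      "distinct (map c (internal P))"
    using c unfolding rainbow_vertex_coloring_def by blast
  define q where "q = map projl (filter isl P)"
  have P_ne: "P \<noteq> []" and P_set: "set P \<subseteq> verts (edge_corona G H)"
    using P(1) unfolding is_path_def by blast+
  obtain P1 where "P = Inl u # P1" using P(2) P_ne by (cases P) auto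
  then have q: "hd q = u" "q \<noteq> []" by (simp_all add: q_def)
  obtain P2 where "P = P2 @ [Inl v]" using P(3) P_ne by (cases P rule: rev_cases) auto
  then have q_last: "last q = v" by (simp add: q_def)
  have "successively (\<lambda>a b. {a, b} \<in> edges G) q"
    using edge_corona_projl_successively[OF assms(1), of H P] P(1,3) P_ne
    by (simp add: q_def is_path_iff_successively)
  moreover have "set q \<subseteq> verts G"
  proof
    fix x assume "x \<in> set q"
    then obtain y where "y \<in> set P" "isl y" "x = projl y" by (auto simp: q_def)
    then have "Inl x \<in> set P" by (cases y) simp_all
    then show "x \<in> verts G" using P_set by auto
  qed
  moreover have "inj_on projl (set (filter isl P))"
    by (rule inj_onI) (metis mem_Collect_eq set_filter sum.collapse(1))
  then have "distinct q"
    using P(1) by (simp add: q_def is_path_def distinct_map)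
  ultimately have "is_path G q" using q(2) by (simp add: is_path_iff_successively)
  moreover have "map (c \<circ> Inl) (internal q) = map c (filter isl (internal P))"
    using P(2,3) by (simp add: q_def internal_map internal_filter comp_def)
  then have "distinct (map (c \<circ> Inl) (internal q))"
    using P(4) by (simp add: distinct_map_filter)
  ultimately show "\<exists>p. is_path G p \<and> hd p = u \<and> last p = v \<and> distinct (map (c \<circ> Inl) (internal p))"
    using q q_last by blast
qed (use c in \<open>simp add: rainbow_vertex_coloring_def\<close>)

lemma edge_corona_complete_copy_twins:
  assumes "w < n" "w' < n" "z \<noteq> Inr (e, w)" "z \<noteq> Inr (e, w')"
  shows "{Inr (e, w), z} \<in> edges (edge_corona G (complete_graph n)) \<longleftrightarrow>
    {Inr (e, w'), z} \<in> edges (edge_corona G (complete_graph n))"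
proof (cases z)
  case (Inr ev)
  with assms show ?thesis by (cases ev) auto
qed (use assms in simp)

lemma edge_corona_complete_locating_inj_on_copy:
  assumes c: "locating_rainbow_coloring (edge_corona G (complete_graph n)) k c"
    and e: "e \<in> edges G"
  shows "inj_on c ((\<lambda>w. Inr (e, w)) ` {0..<n})"
proof (rule inj_onI, rule ccontr)
  fix x y assume "x \<in> (\<lambda>w. Inr (e, w)) ` {0..<n}" "y \<in> (\<lambda>w. Inr (e, w)) ` {0..<n}"
    and "c x = c y" "x \<noteq> y"
  moreover from this(1,2) obtain w w' where "x = Inr (e, w)" "y = Inr (e, w')" "w < n" "w' < n"
    by auto
  ultimately show False
    using locating_twins_colors_differ[OF c, of x y] edge_corona_complete_copy_twins[of w n w' _ e G] e
    by auto
qed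

lemma edge_corona_complete_locating_coloring_gt:
  assumes "simple_graph G" "edges G \<noteq> {}"
    and c: "locating_rainbow_coloring (edge_corona G (complete_graph n)) k c"
  shows "n < k"
proof -
  let ?H = "edge_corona G (complete_graph n)"
  obtain e where e: "e \<in> edges G" using assms(2) by blast
  then obtain a b where ab: "e = {a, b}" "a \<in> verts G"
    using assms(1) by (blast elim: simple_graph_edgeE)
  let ?copy = "(\<lambda>w. Inr (e, w)) ` {0..<n}"
  have colors: "x \<in> verts ?H \<Longrightarrow> c x \<in> {1..k}" for x
    using c by (auto simp: locating_rainbow_coloring_def rainbow_vertex_coloring_def)
  have card_copy: "card (c ` ?copy) = n"
    using edge_corona_complete_locating_inj_on_copy[OF c e] by (simp add: card_image inj_on_def)
  have copy_colors: "c ` ?copy \<subseteq> {1..k}" using colors e by auto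
  then have "n \<le> k" using card_mono[OF _ copy_colors] card_copy by simp
  moreover have "k \<noteq> n"
  proof
    assume "k = n"
    then have all_colors: "c ` ?copy = {1..k}"
      using copy_colors card_copy by (simp add: card_subset_eq)
    have "c (Inl a) \<in> c ` ?copy" unfolding all_colors using colors ab(2) by simp
    then obtain w where w: "w < n" "c (Inr (e, w)) = c (Inl a)" by auto
    have "rainbow_code ?H k c (Inl a) = rainbow_code ?H k c (Inr (e, w))"
    proof (rule rainbow_code_eq_if_common_neighbours)
      fix i assume "i \<in> {1..k}" "i \<noteq> c (Inl a)"
      then have "i \<in> c ` ?copy" unfolding all_colors by simp
      then obtain w' where "w' < n" "c (Inr (e, w')) = i" by auto
      moreover have "w' \<noteq> w" using calculation w(2) \<open>i \<noteq> c (Inl a)\<close> by auto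
      ultimately show "\<exists>z\<in>verts ?H. c z = i \<and> {Inl a, z} \<in> edges ?H \<and> {Inr (e, w), z} \<in> edges ?H"
        using e ab w(1) by (intro bexI[of _ "Inr (e, w')"]) auto
    qed (use e ab w in auto)
    then show False
      using c e ab w by (auto simp: locating_rainbow_coloring_def dest: inj_onD)
  qed
  ultimately show ?thesis by simp
qed

locale corona_coloring =
  fixes G :: "'a graph" and n m :: nat and g :: "'a \<Rightarrow> nat" and f :: "'a set \<Rightarrow> nat"
  assumes simple: "simple_graph G" and connected: "connected_graph G" and n_pos: "0 < n"
    and g: "bij_betw g (verts G) {0..<m}"
    and f: "bij_betw f (edges G) {0..<card (edges G)}"
begin

abbreviation H :: "('a + 'a set \<times> nat) graph" where
  "H \<equiv> edge_corona G (complete_graph n)"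

abbreviation K :: nat where
  "K \<equiv> m + n + card (edges G) - 1"

definition color :: "'a + 'a set \<times> nat \<Rightarrow> nat" where
  "color x = (case x of Inl v \<Rightarrow> g v + 1
     | Inr (e, w) \<Rightarrow> if w = 0 \<and> 0 < f e then m + n + f e else m + w + 1)"

lemma g_less: "v \<in> verts G \<Longrightarrow> g v < m"
  using g by (auto dest: bij_betwE)

lemma f_less: "e \<in> edges G \<Longrightarrow> f e < card (edges G)"
  using f by (auto dest: bij_betwE)

lemma g_eq_iff: "v \<in> verts G \<Longrightarrow> v' \<in> verts G \<Longrightarrow> g v = g v' \<longleftrightarrow> v = v'"
  using bij_betw_imp_inj_on[OF g] by (auto dest: inj_onD)

lemma f_eq_iff: "e \<in> edges G \<Longrightarrow> e' \<in> edges G \<Longrightarrow> f e = f e' \<longleftrightarrow> e = e'"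
  using bij_betw_imp_inj_on[OF f] by (auto dest: inj_onD)

lemma color_Inl [simp]: "color (Inl v) = g v + 1"
  by (simp add: color_def)

lemma color_Inr [simp]:
  "color (Inr (e, w)) = (if w = 0 \<and> 0 < f e then m + n + f e else m + w + 1)"
  by (simp add: color_def)

lemma color_range:
  assumes "x \<in> verts H"
  shows "color x \<in> {1..K}"
  using assms
proof (cases rule: edge_corona_vertexE)
  case (base v)
  then show ?thesis using g_less[of v] n_pos by auto
next
  case (copy e w)
  then show ?thesis using f_less[of e] by auto
qed

lemma inj_on_color_base: "inj_on color (Inl ` verts G)"
  by (auto simp: inj_on_def g_eq_iff)

lemma rainbow_vertex_coloring_color: "rainbow_vertex_coloring H K color"
proof (rule rainbow_vertex_coloringI[OF color_range inj_on_color_base])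
  fix u v assume "u \<in> verts H" "v \<in> verts H"
  then obtain P where "is_path H P" "hd P = u" "last P = v" "set (internal P) \<subseteq> Inl ` verts G"
    by (rule edge_corona_path_through_base[OF simple connected])
  then show "\<exists>P. is_path H P \<and> hd P = u \<and> last P = v \<and> set (internal P) \<subseteq> Inl ` verts G"
    by blast
qed

lemma color_class_private:
  assumes "e \<in> edges G" "0 < f e"
  shows "color_class H color (m + n + f e) = {Inr (e, 0)}"
proof -
  have "x = Inr (e, 0)" if "x \<in> verts H" "color x = m + n + f e" for x
    using that(1)
  proof (cases rule: edge_corona_vertexE)
    case (base v)
    then show ?thesis using that g_less[of v] n_pos by auto
  next
    case (copy e' w)
    then have "f e' = f e" "w = 0" using that(2) assms(2) by (auto split: if_splits)
    then show ?thesis using copy assms f_eq_iff by auto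
  qed
  then show ?thesis using assms n_pos by (auto simp: color_class_def)
qed

lemma rainbow_code_private_color_differs:
  assumes "e \<in> edges G" "e' \<in> edges G" "e \<noteq> e'" "0 < w" "w < n" "0 < f e"
  shows "rainbow_code H K color (Inr (e, w)) \<noteq> rainbow_code H K color (Inr (e', w))"
proof
  let ?R = "color_class H color (m + n + f e)"
  assume codes: "rainbow_code H K color (Inr (e, w)) = rainbow_code H K color (Inr (e', w))"
  have R: "?R = {Inr (e, 0)}" by (rule color_class_private[OF assms(1,6)])
  have "m + n + f e \<in> {1..K}" using f_less[OF assms(1)] assms(6) by simp
  then have "gdist_set H (Inr (e, w)) ?R = gdist_set H (Inr (e', w)) ?R"
    using codes rainbow_code_eq_iff by metis
  moreover have "gdist_set H (Inr (e, w)) ?R = 1"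
    unfolding R using assms by (intro gdist_set_eq_1) auto
  moreover have "2 \<le> gdist_set H (Inr (e', w)) ?R"
    unfolding R using assms by (intro gdist_set_ge_2) auto
  ultimately have "(2::enat) \<le> 1" by metis
  then show False by (simp add: one_enat_def numeral_eq_enat)
qed

lemma color_Inr_eqD:
  assumes "e \<in> edges G" "e' \<in> edges G" "w < n" "w' < n" "(e, w) \<noteq> (e', w')"
    and "color (Inr (e, w)) = color (Inr (e', w'))"
  shows "w' = w" "e \<noteq> e'" "0 < w" "0 < f e \<or> 0 < f e'"
proof -
  \<comment> \<open>private colours exceed m + n and determine their edge, so neither vertex has one\<close>
  have "(w = 0 \<and> 0 < f e) \<longleftrightarrow> (w' = 0 \<and> 0 < f e')"
    using assms(3,4,6) by (auto split: if_splits)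
  moreover have "\<not> ((w = 0 \<and> 0 < f e) \<and> (w' = 0 \<and> 0 < f e'))"
  proof
    assume "(w = 0 \<and> 0 < f e) \<and> (w' = 0 \<and> 0 < f e')"
    moreover from this have "e = e'" using assms(1,2,6) f_eq_iff by simp
    ultimately show False using assms(5) by simp
  qed
  ultimately have ordinary: "\<not> (w = 0 \<and> 0 < f e)" "\<not> (w' = 0 \<and> 0 < f e')" by blast+
  then show "w' = w" using assms(6) by (auto split: if_splits)
  then show "e \<noteq> e'" using assms(5) by auto
  then have "f e \<noteq> f e'" using f_eq_iff[OF assms(1,2)] by simp
  then show "0 < f e \<or> 0 < f e'" by linarith
  with ordinary \<open>w' = w\<close> show "0 < w" by auto
qed

lemma color_eq_cases:
  assumes "x \<in> verts H" "y \<in> verts H" "x \<noteq> y" "color x = color y"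
  obtains e e' w where "x = Inr (e, w)" "y = Inr (e', w)" "e \<in> edges G" "e' \<in> edges G"
    "e \<noteq> e'" "0 < w" "w < n" "0 < f e \<or> 0 < f e'"
  using assms(1)
proof (cases rule: edge_corona_vertexE)
  case x: (base a)
  from assms(2) show ?thesis
  proof (cases rule: edge_corona_vertexE)
    case (base b)
    then show ?thesis using x assms(3,4) g_eq_iff by auto
  next
    case (copy e w)
    then show ?thesis using x g_less[of a] assms(4) by (auto split: if_splits)
  qed
next
  case x: (copy e w)
  from assms(2) show ?thesis
  proof (cases rule: edge_corona_vertexE)
    case (base b)
    then show ?thesis using x g_less[of b] assms(4) by (auto split: if_splits)
  next
    case y: (copy e' w')
    have "w < n" "w' < n" using x(3) y(3) by simp_all
    have "(e, w) \<noteq> (e', w')" using x(1) y(1) assms(3) by auto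
    note eq = color_Inr_eqD[OF x(2) y(2) \<open>w < n\<close> \<open>w' < n\<close> this assms(4)[unfolded x(1) y(1)]]
    show ?thesis by (rule that[of e w e']) (use x y eq in simp_all)
  qed
qed

lemma locating_rainbow_coloring_color: "locating_rainbow_coloring H K color"
  unfolding locating_rainbow_coloring_def
proof (intro conjI rainbow_vertex_coloring_color inj_onI)
  fix x y assume x: "x \<in> verts H" and y: "y \<in> verts H"
    and codes: "rainbow_code H K color x = rainbow_code H K color y"
  show "x = y"
  proof (rule ccontr)
    assume "x \<noteq> y"
    have "color x = color y"
      using rainbow_code_eq_imp_color_eq[OF codes color_range[OF x] x y] by simp
    then obtain e e' w where ew: "x = Inr (e, w)" "y = Inr (e', w)" "e \<in> edges G" "e' \<in> edges G"
      "e \<noteq> e'" "0 < w" "w < n" and has_private: "0 < f e \<or> 0 < f e'"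
      by (rule color_eq_cases[OF x y \<open>x \<noteq> y\<close>])
    from has_private show False
    proof
      assume "0 < f e"
      then show False
        using rainbow_code_private_color_differs[of e e' w] codes ew by simp
    next
      assume "0 < f e'"
      then show False
        using rainbow_code_private_color_differs[of e' e w] codes ew by (simp add: eq_commute)
    qed
  qed
qed

end

lemma edge_corona_complete_locating_coloring:
  assumes "simple_graph G" "connected_graph G" "card (verts G) = m" "0 < n"
  obtains c where
    "locating_rainbow_coloring (edge_corona G (complete_graph n)) (m + n + card (edges G) - 1) c"
proof -
  have "finite (verts G)" using assms(1) by (simp add: simple_graph_def)
  then obtain g where "bij_betw g (verts G) {0..<m}"
    using ex_bij_betw_finite_nat assms(3) by blast
  moreover obtain f where "bij_betw f (edges G) {0..<card (edges G)}"
    using ex_bij_betw_finite_nat[OF finite_edges[OF assms(1)]] by blast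
  ultimately interpret corona_coloring G n m g f
    using assms by unfold_locales
  show ?thesis using that locating_rainbow_coloring_color by blast
qed

theorem theorem3:
  fixes G :: "'a graph" and m n :: nat
  assumes "m \<ge> 2" and "n \<ge> 2"
    and "simple_graph G" and "connected_graph G" and "card (verts G) = m"
  shows "max (rvc G) (n + 1) \<le> rvcl (edge_corona G (complete_graph n)) \<and>
         rvcl (edge_corona G (complete_graph n)) \<le> m + n + card (edges G) - 1"
proof -
  let ?H = "edge_corona G (complete_graph n)"
  have "0 < n" using assms(2) by simp
  then obtain c where c: "locating_rainbow_coloring ?H (m + n + card (edges G) - 1) c"
    by (rule edge_corona_complete_locating_coloring[OF assms(3-5)])
  then obtain c' where c': "locating_rainbow_coloring ?H (rvcl ?H) c'"
    using locating_rainbow_coloring_rvcl by blast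
  have "rvc G \<le> rvcl ?H"
    using c' rainbow_vertex_coloring_edge_corona_base[OF assms(3)] rvc_le
    by (metis locating_rainbow_coloring_def)
  moreover have "n + 1 \<le> rvcl ?H"
    using edge_corona_complete_locating_coloring_gt[OF assms(3) _ c']
      connected_graph_edges_nonempty[OF assms(4)] assms(1,5) by simp
  ultimately show ?thesis using rvcl_le[OF c] by simp
qed

end
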